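(* For every $X \in L^\infty$, the expectation $\mathbb{E}[X]$ is non-empty. Moreover, $\mathbb{E}[X]$ is the smallest closed ball in $\mathbb{K}$ that contains $\mathrm{supp}\, X$ (the closed support of the law of $X$); it is a closed ball of radius $\varepsilon(X)$ (a single point being regarded as a ball of radius $0$).
   Context: $\mathbb{K}$ is a local field (a locally compact, non-discrete, totally disconnected topological field) with non-archimedean absolute value $|\cdot|$ satisfying $|x|=0 \iff x=0$, $|xy|=|x||y|$ and $|x+y|\le |x|\vee|y|$; its nonzero values are the powers $q^k$, $k\in\mathbb{Z}$, for some $q=p^c$ with $p$ prime. $(\Omega,\mathcal{F},\mathbb{P})$ is a probability space and a $\mathbb{K}$-valued random variable is a measurable map into $\mathbb{K}$ with its Borel $\sigma$-field; random variables equal a.s. are identified. $L^\infty$ is the space of $\mathbb{K}$-valued random variables $X$ with $\|X\|_\infty:=\operatorname{ess\,sup}|X|<\infty$. For $X\in L^\infty$, $\varepsilon(X):=\inf\{\|X-c\|_\infty : c\in\mathbb{K}\}$ and the expectation of $X$ is the subset $\mathbb{E}[X]:=\{c\in\mathbb{K} : \|X-c\|_\infty=\varepsilon(X)\}$ of $\mathbb{K}$. *)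

theory Defs
  imports "HOL-Analysis.Analysis" "HOL-Probability.Probability"
begin

text \<open>The local field K is modelled as a type 'k of sort {field, metric_space}
  whose metric is induced by a non-archimedean absolute value absv with value
  group q^Z, q = p^c, p prime.\<close>

definition local_field_absv :: "('k::{field,metric_space} \<Rightarrow> real) \<Rightarrow> real \<Rightarrow> bool" where
  "local_field_absv absv q \<longleftrightarrow>
     (\<forall>x y. dist x y = absv (x - y)) \<and>
     (\<forall>x. absv x = 0 \<longleftrightarrow> x = 0) \<and>
     (\<forall>x y. absv (x * y) = absv x * absv y) \<and>
     (\<forall>x y. absv (x + y) \<le> max (absv x) (absv y)) \<and>
     (\<exists>p c. prime (p::nat) \<and> c \<ge> (1::nat) \<and> q = real (p ^ c)) \<and>
     absv ` (UNIV - {0}) = range (\<lambda>k::int. q powi k) \<and>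
     locally compact (UNIV :: 'k set) \<and>
     (\<forall>x::'k. x islimpt UNIV) \<and>
     (\<forall>S::'k set. connected S \<longrightarrow> (\<exists>a. S \<subseteq> {a}))"

definition norm_inf :: "'a measure \<Rightarrow> ('k \<Rightarrow> real) \<Rightarrow> ('a \<Rightarrow> 'k) \<Rightarrow> ereal" where
  "norm_inf M absv X = esssup M (\<lambda>\<omega>. ereal (absv (X \<omega>)))"

definition in_Linf :: "'a measure \<Rightarrow> ('k::topological_space \<Rightarrow> real) \<Rightarrow> ('a \<Rightarrow> 'k) \<Rightarrow> bool" where
  "in_Linf M absv X \<longleftrightarrow> X \<in> borel_measurable M \<and> norm_inf M absv X < \<infinity>"

definition eps_dev :: "'a measure \<Rightarrow> ('k::ab_group_add \<Rightarrow> real) \<Rightarrow> ('a \<Rightarrow> 'k) \<Rightarrow> ereal" where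
  "eps_dev M absv X = (INF c. norm_inf M absv (\<lambda>\<omega>. X \<omega> - c))"

definition nexp :: "'a measure \<Rightarrow> ('k::ab_group_add \<Rightarrow> real) \<Rightarrow> ('a \<Rightarrow> 'k) \<Rightarrow> 'k set" where
  "nexp M absv X = {c. norm_inf M absv (\<lambda>\<omega>. X \<omega> - c) = eps_dev M absv X}"

definition law_support :: "'a measure \<Rightarrow> ('a \<Rightarrow> 'k::topological_space) \<Rightarrow> 'k set" where
  "law_support M X = {x. \<forall>U. open U \<longrightarrow> x \<in> U \<longrightarrow> emeasure (distr M borel X) U > 0}"

end

theory Submission
  imports Defs
begin

text \<open>Write \<open>N c\<close> for \<open>\<parallel>X - c\<parallel>\<^sub>\<infinity>\<close>. The ultrametric inequality passes to \<open>N\<close>: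
  \<open>N c \<le> max (N c') \<bar>c' - c\<bar>\<close> and \<open>\<bar>c - c'\<bar> \<le> max (N c) (N c')\<close>. Hence, as soon as the
  infimum \<open>\<epsilon>\<close> of \<open>N\<close> is attained at some \<open>c\<^sub>0\<close>, the set of minimisers is exactly the closed
  ball of radius \<open>\<epsilon>\<close> about \<open>c\<^sub>0\<close>; the infimum is attained at a suitable sample value
  \<open>X \<omega>\<close>. This ball contains \<open>X\<close> almost surely, hence the support. Conversely, if the
  support lies in a ball of radius \<open>r\<close> about \<open>c\<close>, then, closed balls being compact, so does
  \<open>X\<close> almost surely; thus \<open>N c \<le> r\<close>, and every minimiser lies within \<open>max (N c) \<epsilon> \<le> r\<close>
  of \<open>c\<close>.\<close>

definition esssup_dist :: "'a measure \<Rightarrow> ('a \<Rightarrow> 'k::metric_space) \<Rightarrow> 'k \<Rightarrow> ereal" where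
  "esssup_dist M X c = esssup M (\<lambda>\<omega>. ereal (dist (X \<omega>) c))"

lemma AE_dist_le_esssup_dist: "AE \<omega> in M. ereal (dist (X \<omega>) c) \<le> esssup_dist M X c"
  unfolding esssup_dist_def by (rule esssup_AE)

lemma (in prob_space) AE_witness:
  assumes "AE \<omega> in M. P \<omega>"
  obtains \<omega> where "P \<omega>"
  using eventually_happens'[OF ae_filter_bot assms] by blast

lemma esssup_dist_le:
  assumes X_measurable: "X \<in> borel_measurable M"
    and "AE \<omega> in M. ereal (dist (X \<omega>) c) \<le> z"
  shows "esssup_dist M X c \<le> z"
proof -
  have "(\<lambda>y. ereal (dist y c)) \<in> borel_measurable borel"
    by (intro borel_measurable_continuous_onI continuous_intros)
  then have "(\<lambda>\<omega>. ereal (dist (X \<omega>) c)) \<in> borel_measurable M"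
    using measurable_comp[OF X_measurable] by (simp add: o_def)
  then show ?thesis
    unfolding esssup_dist_def using assms(2) by (rule esssup_I)
qed

context
  fixes M :: "'a measure" and X :: "'a \<Rightarrow> 'k::metric_space"
  assumes prob: "prob_space M"
    and X_measurable: "X \<in> borel_measurable M"
    and ultrametric: "\<And>x y z :: 'k. dist x z \<le> max (dist x y) (dist y z)"
begin

lemma esssup_dist_le_max: "esssup_dist M X c \<le> max (esssup_dist M X c') (ereal (dist c' c))"
proof (rule esssup_dist_le[OF X_measurable])
  show "AE \<omega> in M. ereal (dist (X \<omega>) c) \<le> max (esssup_dist M X c') (ereal (dist c' c))"
    using AE_dist_le_esssup_dist[of X c' M]
  proof eventually_elim
    case (elim \<omega>)
    have "ereal (dist (X \<omega>) c) \<le> ereal (max (dist (X \<omega>) c') (dist c' c))"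
      using ultrametric[of "X \<omega>" c c'] by (simp del: ereal_max)
    also have "\<dots> \<le> max (esssup_dist M X c') (ereal (dist c' c))"
      unfolding ereal_max using elim by (rule max.mono) simp
    finally show ?case .
  qed
qed

lemma dist_le_max_esssup_dist:
  "ereal (dist c c') \<le> max (esssup_dist M X c) (esssup_dist M X c')"
proof -
  have "AE \<omega> in M. ereal (dist (X \<omega>) c) \<le> esssup_dist M X c
      \<and> ereal (dist (X \<omega>) c') \<le> esssup_dist M X c'"
    using AE_dist_le_esssup_dist[of X c M] AE_dist_le_esssup_dist[of X c' M] by eventually_elim simp
  then obtain \<omega> where \<omega>: "ereal (dist (X \<omega>) c) \<le> esssup_dist M X c"
      "ereal (dist (X \<omega>) c') \<le> esssup_dist M X c'"
    by (rule prob_space.AE_witness[OF prob]) blast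
  have "ereal (dist c c') \<le> ereal (max (dist (X \<omega>) c) (dist (X \<omega>) c'))"
    using ultrametric[of c c' "X \<omega>"] by (simp add: dist_commute del: ereal_max)
  also have "\<dots> \<le> max (esssup_dist M X c) (esssup_dist M X c')"
    unfolding ereal_max using \<omega> by (rule max.mono)
  finally show ?thesis .
qed

lemma esssup_dist_nonneg: "0 \<le> esssup_dist M X c"
  using dist_le_max_esssup_dist[of c c] by (simp add: zero_ereal_def)

text \<open>The infimum is attained at a sample value: for countably many centres \<open>c\<^sub>n\<close>
  approaching the infimum, a single \<open>\<omega>\<close> satisfies \<open>dist (X \<omega>) c\<^sub>n \<le> esssup_dist M X c\<^sub>n\<close>
  for all \<open>n\<close>, and then the ultrametric inequality gives
  \<open>esssup_dist M X (X \<omega>) \<le> esssup_dist M X c\<^sub>n\<close>.\<close>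

lemma esssup_dist_attains_Inf: "\<exists>c. esssup_dist M X c = (INF c. esssup_dist M X c)"
proof -
  obtain f :: "nat \<Rightarrow> ereal" where f: "range f \<subseteq> range (esssup_dist M X)"
      "(INF c. esssup_dist M X c) = (INF n. f n)"
    using Inf_countable_INF[of "range (esssup_dist M X)"] by blast
  then have "\<forall>n. \<exists>c. f n = esssup_dist M X c"
    by fast
  then obtain cs where cs: "\<And>n. f n = esssup_dist M X (cs n)"
    by metis
  have "AE \<omega> in M. \<forall>n. ereal (dist (X \<omega>) (cs n)) \<le> esssup_dist M X (cs n)"
    unfolding AE_all_countable using AE_dist_le_esssup_dist by blast
  then obtain \<omega> where \<omega>: "\<And>n. ereal (dist (X \<omega>) (cs n)) \<le> esssup_dist M X (cs n)"
    by (rule prob_space.AE_witness[OF prob]) blast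
  have "esssup_dist M X (X \<omega>) \<le> f n" for n
    using esssup_dist_le_max[of "X \<omega>" "cs n"] \<omega>[of n] cs[of n]
    by (simp add: dist_commute max_def split: if_splits)
  then have "esssup_dist M X (X \<omega>) \<le> (INF c. esssup_dist M X c)"
    unfolding f(2) by (rule INF_greatest)
  then show ?thesis
    by (intro exI[of _ "X \<omega>"] antisym) (simp_all add: INF_lower)
qed

lemma esssup_dist_argmin_eq_cball:
  assumes c0: "esssup_dist M X c0 = (INF c. esssup_dist M X c)"
    and e: "(INF c. esssup_dist M X c) = ereal e"
  shows "{c. esssup_dist M X c = (INF c. esssup_dist M X c)} = cball c0 e"
proof (intro set_eqI iffI; simp)
  fix c
  assume "esssup_dist M X c = (INF c. esssup_dist M X c)"
  then show "dist c0 c \<le> e"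
    using dist_le_max_esssup_dist[of c0 c] c0 e by simp
next
  fix c
  assume "dist c0 c \<le> e"
  then have "esssup_dist M X c \<le> (INF c. esssup_dist M X c)"
    using esssup_dist_le_max[of c c0] c0 e by (auto simp: max_def split: if_splits)
  then show "esssup_dist M X c = (INF c. esssup_dist M X c)"
    by (rule antisym) (simp_all add: INF_lower)
qed

lemma esssup_dist_argmin_cballE:
  assumes "esssup_dist M X a < \<infinity>"
  obtains c0 e where "0 \<le> e" and "(INF c. esssup_dist M X c) = ereal e"
    and "{c. esssup_dist M X c = (INF c. esssup_dist M X c)} = cball c0 e"
    and "AE \<omega> in M. X \<omega> \<in> cball c0 e"
proof -
  obtain c0 where c0: "esssup_dist M X c0 = (INF c. esssup_dist M X c)"
    using esssup_dist_attains_Inf by blast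
  have "(INF c. esssup_dist M X c) \<le> esssup_dist M X a"
    by (rule INF_lower) simp
  also have "\<dots> < \<infinity>"
    by (rule assms)
  finally have "(INF c. esssup_dist M X c) < \<infinity>" .
  moreover have "0 \<le> (INF c. esssup_dist M X c)"
    using esssup_dist_nonneg c0 by metis
  ultimately obtain e where e: "(INF c. esssup_dist M X c) = ereal e" and "0 \<le> e"
    by (cases "INF c. esssup_dist M X c") auto
  have "AE \<omega> in M. X \<omega> \<in> cball c0 e"
    using AE_dist_le_esssup_dist[of X c0 M] by eventually_elim (simp add: c0 e dist_commute)
  with \<open>0 \<le> e\<close> e esssup_dist_argmin_eq_cball[OF c0 e] show ?thesis
    using that by blast
qed

lemma esssup_dist_argmin_subset_cball:
  assumes "esssup_dist M X c \<le> ereal r"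
  shows "{c'. esssup_dist M X c' = (INF c. esssup_dist M X c)} \<subseteq> cball c r"
proof
  fix c' assume "c' \<in> {c'. esssup_dist M X c' = (INF c. esssup_dist M X c)}"
  then have "esssup_dist M X c' \<le> esssup_dist M X c"
    by (simp add: INF_lower)
  then have "ereal (dist c c') \<le> esssup_dist M X c"
    using dist_le_max_esssup_dist[of c c'] by (simp add: max_absorb1)
  also have "\<dots> \<le> ereal r"
    by (rule assms)
  finally show "c' \<in> cball c r"
    by simp
qed

end

lemma emeasure_distr_eq_0_iff_AE:
  assumes "X \<in> borel_measurable M" and "U \<in> sets borel"
  shows "emeasure (distr M borel X) U = 0 \<longleftrightarrow> (AE \<omega> in M. X \<omega> \<notin> U)"
proof -
  have "(AE \<omega> in M. X \<omega> \<notin> U) \<longleftrightarrow> emeasure M (X -` U \<inter> space M) = 0"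
    by (rule AE_iff_measurable[OF measurable_sets[OF assms]]) auto
  then show ?thesis
    using emeasure_distr[OF assms] by simp
qed

lemma not_in_law_support_iff:
  assumes "X \<in> borel_measurable M"
  shows "x \<notin> law_support M X \<longleftrightarrow> (\<exists>U. open U \<and> x \<in> U \<and> (AE \<omega> in M. X \<omega> \<notin> U))"
  using emeasure_distr_eq_0_iff_AE[OF assms] unfolding law_support_def
  by (auto simp: not_less)

lemma law_support_subset_closed:
  assumes "X \<in> borel_measurable M" and "closed S" and "AE \<omega> in M. X \<omega> \<in> S"
  shows "law_support M X \<subseteq> S"
proof
  fix x assume x: "x \<in> law_support M X"
  show "x \<in> S"
  proof (rule ccontr)
    assume "x \<notin> S"
    with assms(2,3) have "\<exists>U. open U \<and> x \<in> U \<and> (AE \<omega> in M. X \<omega> \<notin> U)"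
      by (intro exI[of _ "- S"]) (simp add: open_Compl)
    with x show False
      using not_in_law_support_iff[OF assms(1)] by blast
  qed
qed

lemma AE_not_in_compact_disjoint_law_support:
  assumes X: "X \<in> borel_measurable M" and "compact K" and "K \<inter> law_support M X = {}"
  shows "AE \<omega> in M. X \<omega> \<notin> K"
proof -
  define \<U> where "\<U> = {U. open U \<and> (AE \<omega> in M. X \<omega> \<notin> U)}"
  have "K \<subseteq> \<Union>\<U>"
  proof
    fix x assume "x \<in> K"
    then have "x \<notin> law_support M X"
      using assms(3) by blast
    then show "x \<in> \<Union>\<U>"
      unfolding not_in_law_support_iff[OF X] \<U>_def by blast
  qed
  then obtain \<F> where \<F>: "\<F> \<subseteq> \<U>" "finite \<F>" "K \<subseteq> \<Union>\<F>"
    by (rule compactE[OF \<open>compact K\<close>]) (simp add: \<U>_def)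
  have "AE \<omega> in M. \<forall>U\<in>\<F>. X \<omega> \<notin> U"
    using \<F> by (intro AE_finite_allI) (auto simp: \<U>_def)
  then show ?thesis
    by eventually_elim (use \<F>(3) in blast)
qed

text \<open>Without second countability the complement of the support need not be null. Here the
  complement of the ball is exhausted by the compact sets \<open>K n\<close>, each of which is covered by
  finitely many null open sets.\<close>

lemma AE_in_cball_if_law_support_subset:
  fixes X :: "'a \<Rightarrow> 'k::metric_space"
  assumes X: "X \<in> borel_measurable M" and proper: "\<And>x :: 'k. \<And>R. compact (cball x R)"
    and support: "law_support M X \<subseteq> cball c r"
  shows "AE \<omega> in M. X \<omega> \<in> cball c r"
proof -
  define K where "K n = cball c (real n) - ball c (r + inverse (real (Suc n)))" for n
  have "AE \<omega> in M. X \<omega> \<notin> K n" for n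
  proof (rule AE_not_in_compact_disjoint_law_support[OF X])
    show "compact (K n)"
      unfolding K_def Diff_eq by (rule compact_Int_closed[OF proper]) auto
    show "K n \<inter> law_support M X = {}"
    proof (intro equals0I)
      fix y assume "y \<in> K n \<inter> law_support M X"
      then have "dist c y \<le> r" and "\<not> dist c y < r + inverse (real (Suc n))"
        using support unfolding K_def by auto
      moreover have "0 < inverse (real (Suc n))"
        by simp
      ultimately show False
        by linarith
    qed
  qed
  then have AE_K: "AE \<omega> in M. \<forall>n. X \<omega> \<notin> K n"
    by (simp add: AE_all_countable)
  have cover: "- cball c r \<subseteq> (\<Union>n. K n)"
  proof
    fix y assume "y \<in> - cball c r"
    then have "0 < dist c y - r" by simp
    then obtain n1 where n1: "0 < n1" "inverse (real n1) < dist c y - r"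
      using ex_inverse_of_nat_less by blast
    obtain n2 where n2: "dist c y \<le> real n2"
      using real_arch_simple by blast
    define n where "n = max n1 n2"
    have "inverse (real (Suc n)) \<le> inverse (real n1)"
      using n1(1) unfolding n_def by (intro le_imp_inverse_le) auto
    then have "inverse (real (Suc n)) < dist c y - r" and "dist c y \<le> real n"
      using n1 n2 unfolding n_def by linarith+
    then show "y \<in> (\<Union>n. K n)"
      unfolding K_def by auto
  qed
  from AE_K show ?thesis
    by eventually_elim (use cover in blast)
qed

lemma locally_compact_UNIV_compact_cballE:
  fixes x :: "'a::metric_space"
  assumes "locally compact (UNIV :: 'a set)"
  obtains e where "0 < e" and "compact (cball x e)"
proof -
  obtain U K where "x \<in> U" "U \<subseteq> K" "open U" "compact K"
    using assms unfolding locally_compact by (metis UNIV_I open_openin subtopology_UNIV)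
  moreover obtain e where "0 < e" "cball x e \<subseteq> U"
    using open_contains_cball \<open>open U\<close> \<open>x \<in> U\<close> by blast
  ultimately have "compact (cball x e)"
    using compact_Int_closed[of K "cball x e"] by (simp add: Int_absorb1)
  with \<open>0 < e\<close> show ?thesis
    by (rule that)
qed

context
  fixes absv :: "'k::{field,metric_space} \<Rightarrow> real" and q :: real
  assumes local_field: "local_field_absv absv q"
begin

lemma local_field_dist: "dist x y = absv (x - y)"
  using local_field unfolding local_field_absv_def by (elim conjE) (rule spec2)

lemma local_field_absv_mult: "absv (x * y) = absv x * absv y"
  using local_field unfolding local_field_absv_def by (elim conjE) (rule spec2)

lemma local_field_absv_add_le: "absv (x + y) \<le> max (absv x) (absv y)"
  using local_field unfolding local_field_absv_def by (elim conjE) (rule spec2)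

lemma local_field_ultrametric: "dist (x::'k) z \<le> max (dist x y) (dist y z)"
  using local_field_absv_add_le[of "x - y" "y - z"] by (simp add: local_field_dist)

lemma local_field_absv_unbounded: "\<exists>t. r < absv t"
proof -
  obtain p c where "prime (p::nat)" "c \<ge> (1::nat)" "q = real (p ^ c)"
    using local_field unfolding local_field_absv_def by (elim conjE) blast
  then have "1 < q"
    using prime_gt_1_nat by (simp add: one_less_power)
  then obtain n where "r < q ^ n"
    using real_arch_pow by blast
  moreover have "absv ` (UNIV - {0}) = range (\<lambda>k::int. q powi k)"
    using local_field unfolding local_field_absv_def by (elim conjE)
  then have "q ^ n \<in> absv ` (UNIV - {0})"
    using rangeI[of "\<lambda>k::int. q powi k" "int n"] by simp
  ultimately show ?thesis
    by auto
qed

text \<open>Closed balls are compact: some ball around \<open>0\<close> is compact by local compactness, and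
  the similarity \<open>z \<mapsto> c + t * z\<close> with \<open>absv t\<close> large maps it onto a superset of \<open>cball c R\<close>.\<close>

lemma local_field_compact_cball: "compact (cball (c::'k) R)"
proof -
  have "locally compact (UNIV :: 'k set)"
    using local_field unfolding local_field_absv_def by (elim conjE)
  then obtain \<delta> where \<delta>: "0 < \<delta>" "compact (cball (0::'k) \<delta>)"
    by (rule locally_compact_UNIV_compact_cballE)
  obtain t where t: "\<bar>R\<bar> / \<delta> < absv t"
    using local_field_absv_unbounded by blast
  moreover have "0 \<le> \<bar>R\<bar> / \<delta>"
    using \<delta>(1) by simp
  ultimately have t_pos: "0 < absv t"
    by linarith
  then have "t \<noteq> 0"
    using local_field_dist[of 0 0] by auto
  define f where "f z = c + t * z" for z
  have "dist (f x) (f y) = absv t * dist x y" for x y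
    using local_field_absv_mult[of t "x - y"] by (simp add: f_def local_field_dist right_diff_distrib)
  then have "(absv t)-lipschitz_on UNIV f"
    using t_pos by (intro lipschitz_onI) auto
  then have "compact (f ` cball 0 \<delta>)"
    using \<delta>(2) by (intro compact_continuous_image lipschitz_on_continuous_on continuous_on_subset) auto
  moreover have "cball c R \<subseteq> f ` cball 0 \<delta>"
  proof
    fix y assume "y \<in> cball c R"
    define z where "z = (y - c) / t"
    have "absv z * absv t = dist y c"
      using \<open>t \<noteq> 0\<close> by (simp add: z_def local_field_dist flip: local_field_absv_mult)
    then have "absv z * absv t < \<delta> * absv t"
      using \<open>y \<in> cball c R\<close> t \<delta>(1) by (simp add: dist_commute field_simps)
    then have "z \<in> cball 0 \<delta>"
      using t_pos local_field_dist[of z 0] by (simp add: dist_commute[of 0 z])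
    moreover have "y = f z"
      using \<open>t \<noteq> 0\<close> by (simp add: f_def z_def)
    ultimately show "y \<in> f ` cball 0 \<delta>"
      by blast
  qed
  ultimately show ?thesis
    using compact_Int_closed[of "f ` cball 0 \<delta>" "cball c R"] by (simp add: Int_absorb1)
qed

lemma norm_inf_eq_esssup_dist: "norm_inf M absv (\<lambda>\<omega>. X \<omega> - c) = esssup_dist M X c"
  by (simp add: norm_inf_def esssup_dist_def local_field_dist)

end

theorem mainTheorem1:
  fixes M :: "'a measure" and absv :: "'k::{field,metric_space} \<Rightarrow> real" and q :: real
    and X :: "'a \<Rightarrow> 'k"
  assumes "local_field_absv absv q"
    and "prob_space M"
    and "in_Linf M absv X"
  shows "nexp M absv X \<noteq> {}
    \<and> (\<exists>c. nexp M absv X = cball c (real_of_ereal (eps_dev M absv X)))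
    \<and> law_support M X \<subseteq> nexp M absv X
    \<and> (\<forall>c r. r \<ge> 0 \<longrightarrow> law_support M X \<subseteq> cball c r \<longrightarrow> nexp M absv X \<subseteq> cball c r)"
proof -
  note ultrametric = local_field_ultrametric[OF assms(1)]
  have X: "X \<in> borel_measurable M"
    using assms(3) by (simp add: in_Linf_def)
  have nexp: "nexp M absv X = {c. esssup_dist M X c = (INF c. esssup_dist M X c)}"
    and eps: "eps_dev M absv X = (INF c. esssup_dist M X c)"
    by (simp_all add: nexp_def eps_dev_def norm_inf_eq_esssup_dist[OF assms(1)])
  have "esssup_dist M X 0 < \<infinity>"
    using assms(3) norm_inf_eq_esssup_dist[OF assms(1), of M X 0] by (simp add: in_Linf_def)
  then obtain c0 e where "0 \<le> e" and e: "(INF c. esssup_dist M X c) = ereal e"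
    and ball: "nexp M absv X = cball c0 e" and AE_ball: "AE \<omega> in M. X \<omega> \<in> cball c0 e"
    unfolding nexp by (rule esssup_dist_argmin_cballE[OF assms(2) X ultrametric])
  have "law_support M X \<subseteq> nexp M absv X"
    unfolding ball using X closed_cball AE_ball by (rule law_support_subset_closed)
  moreover have "nexp M absv X \<subseteq> cball c r" if "law_support M X \<subseteq> cball c r" for c r
  proof -
    have "AE \<omega> in M. X \<omega> \<in> cball c r"
      using AE_in_cball_if_law_support_subset[OF X local_field_compact_cball[OF assms(1)] that] .
    then have "esssup_dist M X c \<le> ereal r"
      by (intro esssup_dist_le[OF X]) (auto simp: dist_commute elim: eventually_mono)
    then show ?thesis
      unfolding nexp by (rule esssup_dist_argmin_subset_cball[OF assms(2) X ultrametric])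
  qed
  ultimately show ?thesis
    using ball eps e \<open>0 \<le> e\<close> by auto
qed

end
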